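(* Let $\rho$ be a compatible objective functional for the uncertainty triplet $(\mathcal G,\mathcal Z,\pi)$ and $X\in\mathcal Z$. (i) Suppose $(\mathcal Z,\pi)=(L^\infty_n,\pi^\infty_n)$. If $\mathcal G_X(\rho)$ contains a continuous function $g:\mathbb R^n\to\mathbb R$ and $\rho$ is $\pi^\infty_1$-continuous, then $\rho$ is robust at $X$ relative to $(\mathcal G,\mathcal Z,\pi)$. (ii) Suppose $(\mathcal Z,\pi)=(L^q_n,\pi^q_n)$, $q\in[1,\infty)$. If $\mathcal G_X(\rho)$ contains a continuous and linearly growing function $g:\mathbb R^n\to\mathbb R$ and $\rho$ is $\pi^q_1$-continuous, then $\rho$ is robust at $X$ relative to $(\mathcal G,\mathcal Z,\pi)$. (iii) Suppose $(\mathcal Z,\pi)=(L^0_n,\pi^W_n)$. If $\mathcal G_X(\rho)$ contains a continuous function $g:\mathbb R^n\to\mathbb R$ and $\rho$ is $\pi^W_1$-continuous, then $\rho$ is robust at $X$ relative to $(\mathcal G,\mathcal Z,\pi)$.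
   Context: Work on an atomless probability space; $L^q_n=(L^q)^n$ etc. For $n$-dimensional random vectors: $\pi^\infty_n(Y,Z)=\mathrm{ess\text{-}sup}|Y-Z|$; $\pi^q_n(Y,Z)=(\mathbb E|Y-Z|^q)^{1/q}$; $\pi^W_n(Y,Z)$ is the Prokhorov distance between the laws of $Y$ and $Z$ ($|\cdot|$ Euclidean norm). A function $g:\mathbb R^n\to\mathbb R$ is linearly growing if for some $C>0$, $|g(y)|\le C|y|$ for all $|y|>1$. $\mathcal G_n$ is the set of measurable functions $\mathbb R^n\to\mathbb R$. An uncertainty triplet $(\mathcal G,\mathcal Z,\pi)$ consists of $\mathcal G\subset\mathcal G_n$ and a pseudo-metric space $(\mathcal Z,\pi)$ of $n$-random vectors. An objective functional $\rho$ is compatible if it maps $\{g(Z):Z\in\mathcal Z,g\in\mathcal G\}$ to $\mathbb R\cup\{+\infty\}$ and $\rho(g(Y))=\rho(g(Z))$ whenever $g\in\mathcal G$ and $\pi(Y,Z)=0$. $\mathcal G_X(\rho)=\{g\in\mathcal G:\rho(g(X))=\inf_{h\in\mathcal G}\rho(h(X))\}$. $\rho$ is robust at $X$ relative to $(\mathcal G,\mathcal Z,\pi)$ if some $g_X\in\mathcal G_X(\rho)$ makes $\mathcal Z\ni Y\mapsto\rho(g_X(Y))$ $\pi$-continuous at $Y=X$. *)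

theory Defs
  imports "HOL-Probability.Probability"
begin

definition atomless :: "'w measure \<Rightarrow> bool" where
  "atomless M \<longleftrightarrow> (\<forall>A\<in>sets M. measure M A > 0 \<longrightarrow>
      (\<exists>B\<in>sets M. B \<subseteq> A \<and> 0 < measure M B \<and> measure M B < measure M A))"

definition Linf :: "'w measure \<Rightarrow> ('w \<Rightarrow> real^'n) set" where
  "Linf M = {Y \<in> borel_measurable M. \<exists>C. AE w in M. norm (Y w) \<le> C}"

definition Lq :: "'w measure \<Rightarrow> real \<Rightarrow> ('w \<Rightarrow> real^'n) set" where
  "Lq M q = {Y \<in> borel_measurable M. integrable M (\<lambda>w. norm (Y w) powr q)}"

definition L0 :: "'w measure \<Rightarrow> ('w \<Rightarrow> real^'n) set" where
  "L0 M = borel_measurable M"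

(* Distances; extended-real valued so that they also make sense (possibly = \<infinity>)
   outside the respective spaces *)
definition pi_inf :: "'w measure \<Rightarrow> ('w \<Rightarrow> real^'n) \<Rightarrow> ('w \<Rightarrow> real^'n) \<Rightarrow> ereal" where
  "pi_inf M Y Z = esssup M (\<lambda>w. ereal (norm (Y w - Z w)))"

definition pi_q :: "'w measure \<Rightarrow> real \<Rightarrow> ('w \<Rightarrow> real^'n) \<Rightarrow> ('w \<Rightarrow> real^'n) \<Rightarrow> ereal" where
  "pi_q M q Y Z =
     (if integrable M (\<lambda>w. norm (Y w - Z w) powr q)
      then ereal ((\<integral>w. norm (Y w - Z w) powr q \<partial>M) powr (1 / q)) else \<infinity>)"

definition eps_nbhd :: "real \<Rightarrow> ('a::metric_space) set \<Rightarrow> 'a set" where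
  "eps_nbhd e A = {x. \<exists>a\<in>A. dist x a < e}"

definition prokhorov :: "('a::metric_space) measure \<Rightarrow> 'a measure \<Rightarrow> ereal" where
  "prokhorov \<mu> \<nu> = Inf {ereal e | e. e > 0 \<and>
      (\<forall>A\<in>sets borel. measure \<mu> A \<le> measure \<nu> (eps_nbhd e A) + e \<and>
                       measure \<nu> A \<le> measure \<mu> (eps_nbhd e A) + e)}"

definition pi_W :: "'w measure \<Rightarrow> ('w \<Rightarrow> real^'n) \<Rightarrow> ('w \<Rightarrow> real^'n) \<Rightarrow> ereal" where
  "pi_W M Y Z = prokhorov (distr M borel Y) (distr M borel Z)"

definition to_vec1 :: "('w \<Rightarrow> real) \<Rightarrow> ('w \<Rightarrow> real^1)" where
  "to_vec1 U = (\<lambda>w. vec (U w))"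

definition pi_inf1 :: "'w measure \<Rightarrow> ('w \<Rightarrow> real) \<Rightarrow> ('w \<Rightarrow> real) \<Rightarrow> ereal" where
  "pi_inf1 M U V = pi_inf M (to_vec1 U) (to_vec1 V)"

definition pi_q1 :: "'w measure \<Rightarrow> real \<Rightarrow> ('w \<Rightarrow> real) \<Rightarrow> ('w \<Rightarrow> real) \<Rightarrow> ereal" where
  "pi_q1 M q U V = pi_q M q (to_vec1 U) (to_vec1 V)"

definition pi_W1 :: "'w measure \<Rightarrow> ('w \<Rightarrow> real) \<Rightarrow> ('w \<Rightarrow> real) \<Rightarrow> ereal" where
  "pi_W1 M U V = pi_W M (to_vec1 U) (to_vec1 V)"

definition linearly_growing :: "('a::real_normed_vector \<Rightarrow> real) \<Rightarrow> bool" where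
  "linearly_growing g \<longleftrightarrow> (\<exists>C>0. \<forall>y. norm y > 1 \<longrightarrow> \<bar>g y\<bar> \<le> C * norm y)"

definition obj_dom :: "('a \<Rightarrow> real) set \<Rightarrow> ('w \<Rightarrow> 'a) set \<Rightarrow> ('w \<Rightarrow> real) set" where
  "obj_dom G Zs = {g \<circ> Z | g Z. g \<in> G \<and> Z \<in> Zs}"

definition compatible ::
  "(('w \<Rightarrow> real) \<Rightarrow> ereal) \<Rightarrow> ('a \<Rightarrow> real) set \<Rightarrow> ('w \<Rightarrow> 'a) set
     \<Rightarrow> (('w \<Rightarrow> 'a) \<Rightarrow> ('w \<Rightarrow> 'a) \<Rightarrow> ereal) \<Rightarrow> bool" where
  "compatible \<rho> G Zs p \<longleftrightarrow>
     (\<forall>U\<in>obj_dom G Zs. \<rho> U \<noteq> -\<infinity>) \<and>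
     (\<forall>g\<in>G. \<forall>Y\<in>Zs. \<forall>Z\<in>Zs. p Y Z = 0 \<longrightarrow> \<rho> (g \<circ> Y) = \<rho> (g \<circ> Z))"

definition optimal_set ::
  "(('w \<Rightarrow> real) \<Rightarrow> ereal) \<Rightarrow> ('a \<Rightarrow> real) set \<Rightarrow> ('w \<Rightarrow> 'a) \<Rightarrow> ('a \<Rightarrow> real) set" where
  "optimal_set \<rho> G X = {g \<in> G. \<rho> (g \<circ> X) = (INF h\<in>G. \<rho> (h \<circ> X))}"

definition pcont_at :: "'b set \<Rightarrow> ('b \<Rightarrow> 'b \<Rightarrow> ereal) \<Rightarrow> ('b \<Rightarrow> ereal) \<Rightarrow> 'b \<Rightarrow> bool" where
  "pcont_at S p F x \<longleftrightarrow>
     (\<forall>T. open T \<and> F x \<in> T \<longrightarrow> (\<exists>\<delta>>0. \<forall>y\<in>S. p x y < ereal \<delta> \<longrightarrow> F y \<in> T))"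

definition robust ::
  "(('w \<Rightarrow> real) \<Rightarrow> ereal) \<Rightarrow> ('a \<Rightarrow> real) set \<Rightarrow> ('w \<Rightarrow> 'a) set
     \<Rightarrow> (('w \<Rightarrow> 'a) \<Rightarrow> ('w \<Rightarrow> 'a) \<Rightarrow> ereal) \<Rightarrow> ('w \<Rightarrow> 'a) \<Rightarrow> bool" where
  "robust \<rho> G Zs p X \<longleftrightarrow>
     (\<exists>gX\<in>optimal_set \<rho> G X. pcont_at Zs p (\<lambda>Y. \<rho> (gX \<circ> Y)) X)"

end

theory Submission
  imports Defs
begin

(* Since \<rho> is continuous on the one-dimensional objects, robustness at X follows once
   Y \<mapsto> g \<circ> Y is continuous at X from (\<Z>, \<pi>) to the corresponding one-dimensional distance.
   All three continuity statements rest on one truncation: X lies in a ball of radius R up to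
   small probability, and on that ball g is uniformly continuous.  For \<pi>^\<infinity> this is immediate.
   For the Prokhorov distance it lets g map \<epsilon>-neighbourhoods into small neighbourhoods.
   For \<pi>^q, linear growth bounds |g(X) - g(Y)|^q by an integrable function of X plus a multiple
   of |X - Y|^q; the contribution of the bad event "|X| > R or |X - Y| \<ge> \<eta>" is controlled by
   uniform integrability of that function and by Markov's inequality. *)

definition pcont_map_at ::
  "'b set \<Rightarrow> ('b \<Rightarrow> 'b \<Rightarrow> ereal) \<Rightarrow> ('c \<Rightarrow> 'c \<Rightarrow> ereal) \<Rightarrow> ('b \<Rightarrow> 'c) \<Rightarrow> 'b \<Rightarrow> bool" where
  "pcont_map_at S p p' f x \<longleftrightarrow>
     (\<forall>e>0. \<exists>\<delta>>0. \<forall>y\<in>S. p x y < ereal \<delta> \<longrightarrow> p' (f x) (f y) < ereal e)"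

lemma pcont_at_compose:
  assumes f: "pcont_map_at S p p' f x" and fS: "f ` S \<subseteq> S'" and F: "pcont_at S' p' F (f x)"
  shows "pcont_at S p (\<lambda>y. F (f y)) x"
  unfolding pcont_at_def
proof (intro allI impI)
  fix T assume "open T \<and> F (f x) \<in> T"
  then obtain e where e: "e > 0" "\<forall>z\<in>S'. p' (f x) z < ereal e \<longrightarrow> F z \<in> T"
    using F unfolding pcont_at_def by blast
  moreover obtain \<delta> where "\<delta> > 0" "\<forall>y\<in>S. p x y < ereal \<delta> \<longrightarrow> p' (f x) (f y) < ereal e"
    using f e(1) unfolding pcont_map_at_def by blast
  ultimately show "\<exists>\<delta>>0. \<forall>y\<in>S. p x y < ereal \<delta> \<longrightarrow> F (f y) \<in> T"
    using fS by blast
qed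

lemma robust_if_pcont_map_at:
  assumes g: "g \<in> optimal_set \<rho> G X" and X: "X \<in> Zs"
    and \<rho>: "\<forall>U\<in>obj_dom G Zs. pcont_at (obj_dom G Zs) p1 \<rho> U"
    and cont: "pcont_map_at Zs p p1 ((\<circ>) g) X"
  shows "robust \<rho> G Zs p X"
proof -
  have "g \<in> G" using g by (simp add: optimal_set_def)
  then have "(\<circ>) g ` Zs \<subseteq> obj_dom G Zs" by (auto simp: obj_dom_def)
  with X have "pcont_at Zs p (\<lambda>Y. \<rho> (g \<circ> Y)) X"
    using \<rho> by (intro pcont_at_compose[OF cont]) auto
  with g show ?thesis unfolding robust_def by blast
qed

lemma uniform_continuity_near_cball:
  fixes h :: "'a::euclidean_space \<Rightarrow> 'b::metric_space"
  assumes "continuous_on UNIV h" "e > 0"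
  obtains \<eta> where "\<eta> > 0" "\<And>x y. norm x \<le> R \<Longrightarrow> dist x y < \<eta> \<Longrightarrow> dist (h x) (h y) < e"
proof -
  have "uniformly_continuous_on (cball 0 (R + 1)) h"
    by (rule compact_uniformly_continuous) (auto intro: continuous_on_subset[OF assms(1)])
  then obtain d where d: "d > 0"
    "\<forall>x\<in>cball 0 (R + 1). \<forall>y\<in>cball 0 (R + 1). dist y x < d \<longrightarrow> dist (h y) (h x) < e"
    unfolding uniformly_continuous_on_def using assms(2) by blast
  show ?thesis
  proof
    fix x y :: 'a assume xy: "norm x \<le> R" "dist x y < min d 1"
    then have "norm y \<le> R + 1"
      using norm_triangle_ineq[of x "y - x"] by (simp add: dist_norm norm_minus_commute)
    with d xy show "dist (h x) (h y) < e" by (auto simp: dist_commute)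
  qed (use d in auto)
qed

lemma (in finite_measure) ex_measure_norm_gt_less:
  fixes X :: "'a \<Rightarrow> 'b::real_normed_vector"
  assumes X: "X \<in> borel_measurable M" and e: "e > 0"
  obtains R where "measure M {w\<in>space M. R < norm (X w)} < e"
proof -
  define A where "A n = {w\<in>space M. real n < norm (X w)}" for n :: nat
  have "A n \<in> sets M" for n unfolding A_def using X by measurable
  then have A: "range A \<subseteq> sets M" by auto
  have "decseq A" unfolding A_def decseq_def by auto
  moreover have "(\<Inter>n. A n) = {}"
  proof safe
    fix w assume "w \<in> (\<Inter>n. A n)"
    moreover obtain n where "norm (X w) < real n" using reals_Archimedean2 by blast
    ultimately show "w \<in> {}" unfolding A_def using less_asym by blast
  qed
  ultimately have "(\<lambda>n. measure M (A n)) \<longlonglongrightarrow> 0"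
    using finite_Lim_measure_decseq[OF A] by simp
  then have "eventually (\<lambda>n. measure M (A n) < e) sequentially"
    using e by (rule order_tendstoD)
  then obtain n where "measure M (A n) < e" by (auto simp: eventually_sequentially)
  then show ?thesis unfolding A_def by (rule that)
qed

lemma norm_vec1_diff: "norm (vec a - vec b :: real^1) = \<bar>a - b\<bar>"
  by (simp add: norm_real)

lemma pcont_map_at_pi_inf:
  fixes g :: "real^'n \<Rightarrow> real" and X :: "'w \<Rightarrow> real^'n"
  assumes X: "X \<in> Linf M" and g: "continuous_on UNIV g"
  shows "pcont_map_at (Linf M) (pi_inf M) (pi_inf1 M) ((\<circ>) g) X"
  unfolding pcont_map_at_def
proof (intro allI impI)
  fix d :: real assume d: "d > 0"
  obtain C where C: "AE w in M. norm (X w) \<le> C" and Xm: "X \<in> borel_measurable M"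
    using X by (auto simp: Linf_def)
  obtain \<eta> where \<eta>: "\<eta> > 0" "\<And>x y. norm x \<le> C \<Longrightarrow> dist x y < \<eta> \<Longrightarrow> dist (g x) (g y) < d/2"
    using uniform_continuity_near_cball[OF g, of "d/2" C] d by auto
  have gm: "g \<in> borel_measurable borel" using g by (rule borel_measurable_continuous_onI)
  show "\<exists>\<delta>>0. \<forall>Y\<in>Linf M. pi_inf M X Y < ereal \<delta> \<longrightarrow> pi_inf1 M (g \<circ> X) (g \<circ> Y) < ereal d"
  proof (intro exI[of _ \<eta>] conjI ballI impI)
    fix Y assume Y: "Y \<in> Linf M" "pi_inf M X Y < ereal \<eta>"
    have "AE w in M. ereal (norm (X w - Y w)) \<le> pi_inf M X Y"
      unfolding pi_inf_def by (rule esssup_AE)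
    then have close: "AE w in M. dist (X w) (Y w) < \<eta>"
    proof (rule eventually_mono)
      fix w assume "ereal (norm (X w - Y w)) \<le> pi_inf M X Y"
      then have "ereal (norm (X w - Y w)) < ereal \<eta>" using Y(2) by (rule order.strict_trans1)
      then show "dist (X w) (Y w) < \<eta>" by (simp add: dist_norm)
    qed
    have Ym: "Y \<in> borel_measurable M" using Y(1) by (simp add: Linf_def)
    have "esssup M (\<lambda>w. ereal \<bar>g (X w) - g (Y w)\<bar>) \<le> ereal (d/2)"
    proof (rule esssup_I)
      show "(\<lambda>w. ereal \<bar>g (X w) - g (Y w)\<bar>) \<in> borel_measurable M"
        using gm Xm Ym by measurable
      show "AE w in M. ereal \<bar>g (X w) - g (Y w)\<bar> \<le> ereal (d/2)"
        using close C
      proof eventually_elim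
        case (elim w)
        with \<eta>(2) show ?case by (simp add: dist_real_def less_imp_le)
      qed
    qed
    also have "\<dots> < ereal d" using d by simp
    finally show "pi_inf1 M (g \<circ> X) (g \<circ> Y) < ereal d"
      by (simp add: pi_inf1_def pi_inf_def to_vec1_def norm_vec1_diff)
  qed (use \<eta> in auto)
qed

lemma open_eps_nbhd: "open (eps_nbhd e A)"
proof -
  have "eps_nbhd e A = (\<Union>a\<in>A. ball a e)" by (auto simp: eps_nbhd_def ball_def dist_commute)
  then show ?thesis by (simp add: open_UN)
qed

lemma eps_nbhd_mono: "e \<le> e' \<Longrightarrow> eps_nbhd e A \<subseteq> eps_nbhd e' A"
  unfolding eps_nbhd_def by (blast intro: less_le_trans)

lemma eps_nbhd_vimage_Int_subset:
  assumes "\<And>x y. x \<in> K \<Longrightarrow> dist x y < e \<Longrightarrow> dist (h x) (h y) < r"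
  shows "eps_nbhd e (h -` B \<inter> K) \<subseteq> h -` eps_nbhd r B"
proof
  fix y assume "y \<in> eps_nbhd e (h -` B \<inter> K)"
  then obtain a where "h a \<in> B" "a \<in> K" "dist a y < e" by (auto simp: eps_nbhd_def dist_commute)
  with assms have "dist (h y) (h a) < r" by (simp add: dist_commute)
  with \<open>h a \<in> B\<close> show "y \<in> h -` eps_nbhd r B" by (auto simp: eps_nbhd_def)
qed

lemma Int_eps_nbhd_vimage_subset:
  assumes "\<And>x y. x \<in> K \<Longrightarrow> dist x y < e \<Longrightarrow> dist (h x) (h y) < r"
  shows "eps_nbhd e (h -` B) \<inter> K \<subseteq> h -` eps_nbhd r B"
proof
  fix x assume "x \<in> eps_nbhd e (h -` B) \<inter> K"
  then obtain a where "h a \<in> B" "x \<in> K" "dist x a < e" by (auto simp: eps_nbhd_def)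
  with assms have "dist (h x) (h a) < r" by simp
  with \<open>h a \<in> B\<close> show "x \<in> h -` eps_nbhd r B" by (auto simp: eps_nbhd_def)
qed

lemma measure_vimage_le_eps_nbhd:
  assumes \<mu>: "prob_space \<mu>" "sets \<mu> = sets borel" and \<nu>: "prob_space \<nu>" "sets \<nu> = sets borel"
    and h: "h \<in> borel_measurable borel" and K: "K \<in> sets borel"
    and hK: "\<And>x y. x \<in> K \<Longrightarrow> dist x y < e \<Longrightarrow> dist (h x) (h y) < r"
    and \<mu>\<nu>: "\<forall>A\<in>sets borel. measure \<mu> A \<le> measure \<nu> (eps_nbhd e A) + e \<and>
                           measure \<nu> A \<le> measure \<mu> (eps_nbhd e A) + e"
    and B: "B \<in> sets borel"
  shows "measure \<mu> (h -` B) \<le> measure \<nu> (h -` eps_nbhd r B) + e + measure \<mu> (- K)"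
    and "measure \<nu> (h -` B) \<le> measure \<mu> (h -` eps_nbhd r B) + e + measure \<mu> (- K)"
proof -
  interpret \<mu>: prob_space \<mu> by fact
  interpret \<nu>: prob_space \<nu> by fact
  have cK: "- K \<in> sets borel" using K by (rule borel_comp)
  have hB: "h -` B \<in> sets borel" using measurable_sets[OF h B] by simp
  have Ne: "eps_nbhd e (h -` B) \<in> sets borel" by (simp add: open_eps_nbhd)
  have Nr: "h -` eps_nbhd r B \<in> sets borel"
    using measurable_sets[OF h, of "eps_nbhd r B"] by (simp add: open_eps_nbhd)
  have "measure \<mu> (h -` B) \<le> measure \<mu> (h -` B \<inter> K \<union> - K)"
    by (rule \<mu>.finite_measure_mono) (auto simp: \<mu>(2) intro!: sets.Un sets.Int hB K cK)
  also have "\<dots> \<le> measure \<mu> (h -` B \<inter> K) + measure \<mu> (- K)"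
    by (rule measure_Un_le) (simp_all add: \<mu>(2) sets.Int hB K cK)
  also have "measure \<mu> (h -` B \<inter> K) \<le> measure \<nu> (eps_nbhd e (h -` B \<inter> K)) + e"
    using \<mu>\<nu> hB K by blast
  also have "measure \<nu> (eps_nbhd e (h -` B \<inter> K)) \<le> measure \<nu> (h -` eps_nbhd r B)"
    using eps_nbhd_vimage_Int_subset[where h=h and K=K] hK Nr \<nu>(2)
    by (metis \<nu>.finite_measure_mono)
  finally show "measure \<mu> (h -` B) \<le> measure \<nu> (h -` eps_nbhd r B) + e + measure \<mu> (- K)"
    by simp
  have "measure \<nu> (h -` B) \<le> measure \<mu> (eps_nbhd e (h -` B)) + e"
    using \<mu>\<nu> hB by blast
  also have "measure \<mu> (eps_nbhd e (h -` B)) \<le> measure \<mu> (eps_nbhd e (h -` B) \<inter> K \<union> - K)"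
    by (rule \<mu>.finite_measure_mono) (auto simp: \<mu>(2) intro!: sets.Un sets.Int Ne K cK)
  also have "\<dots> \<le> measure \<mu> (eps_nbhd e (h -` B) \<inter> K) + measure \<mu> (- K)"
    by (rule measure_Un_le) (simp_all add: \<mu>(2) sets.Int Ne K cK)
  also have "measure \<mu> (eps_nbhd e (h -` B) \<inter> K) \<le> measure \<mu> (h -` eps_nbhd r B)"
    using Int_eps_nbhd_vimage_subset[where h=h and K=K] hK Nr \<mu>(2)
    by (metis \<mu>.finite_measure_mono)
  finally show "measure \<nu> (h -` B) \<le> measure \<mu> (h -` eps_nbhd r B) + e + measure \<mu> (- K)"
    by simp
qed

lemma prokhorov_distr_le:
  fixes h :: "'a::metric_space \<Rightarrow> 'b::metric_space"
  assumes \<mu>: "prob_space \<mu>" "sets \<mu> = sets borel" and \<nu>: "prob_space \<nu>" "sets \<nu> = sets borel"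
    and h: "h \<in> borel_measurable borel"
    and K: "K \<in> sets borel" "measure \<mu> (- K) \<le> t"
    and hK: "\<And>x y. x \<in> K \<Longrightarrow> dist x y < e \<Longrightarrow> dist (h x) (h y) < r"
    and \<mu>\<nu>: "\<forall>A\<in>sets borel. measure \<mu> A \<le> measure \<nu> (eps_nbhd e A) + e \<and>
                           measure \<nu> A \<le> measure \<mu> (eps_nbhd e A) + e"
    and s: "0 < s" "r \<le> s" "e + t \<le> s"
  shows "prokhorov (distr \<mu> borel h) (distr \<nu> borel h) \<le> ereal s"
proof -
  interpret \<mu>: prob_space \<mu> by fact
  interpret \<nu>: prob_space \<nu> by fact
  have sp: "space \<mu> = UNIV" "space \<nu> = UNIV"
    using \<mu>(2) \<nu>(2) by (auto dest: sets_eq_imp_space_eq)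
  have hm: "h \<in> measurable \<mu> borel" "h \<in> measurable \<nu> borel"
    using h \<mu>(2) \<nu>(2) by (simp_all cong: measurable_cong_sets)
  have distr: "measure (distr \<mu> borel h) A = measure \<mu> (h -` A)"
    "measure (distr \<nu> borel h) A = measure \<nu> (h -` A)" if "A \<in> sets borel" for A
    using hm that by (simp_all add: measure_distr sp)
  have "measure (distr \<mu> borel h) B \<le> measure (distr \<nu> borel h) (eps_nbhd s B) + s \<and>
        measure (distr \<nu> borel h) B \<le> measure (distr \<mu> borel h) (eps_nbhd s B) + s"
    if B: "B \<in> sets borel" for B
  proof -
    have Ns: "h -` eps_nbhd s B \<in> sets borel" "eps_nbhd s B \<in> sets borel"
      using measurable_sets[OF h, of "eps_nbhd s B"] by (simp_all add: open_eps_nbhd)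
    have "h -` eps_nbhd r B \<subseteq> h -` eps_nbhd s B"
      using eps_nbhd_mono[OF s(2)] by blast
    then have "measure \<nu> (h -` eps_nbhd r B) \<le> measure \<nu> (h -` eps_nbhd s B)"
      "measure \<mu> (h -` eps_nbhd r B) \<le> measure \<mu> (h -` eps_nbhd s B)"
      using Ns(1) by (simp_all add: \<mu>.finite_measure_mono \<nu>.finite_measure_mono \<mu>(2) \<nu>(2))
    with measure_vimage_le_eps_nbhd[OF \<mu> \<nu> h K(1) hK \<mu>\<nu> B] show ?thesis
      using distr[OF B] distr[OF Ns(2)] K(2) s(3) by linarith
  qed
  then show ?thesis
    unfolding prokhorov_def using s(1) by (intro Inf_lower) blast
qed

lemma prokhorov_distr_continuous:
  fixes h :: "'a::euclidean_space \<Rightarrow> 'b::metric_space"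
  assumes \<mu>: "prob_space \<mu>" "sets \<mu> = sets borel" and h: "continuous_on UNIV h" and d: "d > 0"
  obtains \<delta> where "\<delta> > 0"
    "\<And>\<nu>. prob_space \<nu> \<Longrightarrow> sets \<nu> = sets borel \<Longrightarrow> prokhorov \<mu> \<nu> < ereal \<delta> \<Longrightarrow>
       prokhorov (distr \<mu> borel h) (distr \<nu> borel h) < ereal d"
proof -
  interpret \<mu>: prob_space \<mu> by fact
  have "(\<lambda>x. x) \<in> borel_measurable \<mu>" using \<mu>(2) by (rule measurable_ident_sets)
  moreover have "d/4 > 0" using d by simp
  ultimately obtain R where "measure \<mu> {x\<in>space \<mu>. R < norm x} < d/4"
    by (rule \<mu>.ex_measure_norm_gt_less)
  moreover have "{x\<in>space \<mu>. R < norm x} = - cball 0 R"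
    using sets_eq_imp_space_eq[OF \<mu>(2)] by auto
  ultimately have tail: "measure \<mu> (- cball 0 R) \<le> d/4" by simp
  obtain \<eta> where \<eta>: "\<eta> > 0" "\<And>x y. norm x \<le> R \<Longrightarrow> dist x y < \<eta> \<Longrightarrow> dist (h x) (h y) < d/4"
    using uniform_continuity_near_cball[OF h, of "d/4" R] d by auto
  show ?thesis
  proof (rule that[of "min \<eta> (d/4)"])
    fix \<nu> assume \<nu>: "prob_space \<nu>" "sets \<nu> = sets borel" "prokhorov \<mu> \<nu> < ereal (min \<eta> (d/4))"
    then obtain e where e: "0 < e" "e < min \<eta> (d/4)" and
      \<mu>\<nu>: "\<forall>A\<in>sets borel. measure \<mu> A \<le> measure \<nu> (eps_nbhd e A) + e \<and>
                       measure \<nu> A \<le> measure \<mu> (eps_nbhd e A) + e"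
      unfolding prokhorov_def Inf_less_iff by auto
    have "prokhorov (distr \<mu> borel h) (distr \<nu> borel h) \<le> ereal (d/2)"
    proof (rule prokhorov_distr_le[OF \<mu> \<nu>(1,2) _ _ tail _ \<mu>\<nu>])
      show "h \<in> borel_measurable borel" using h by (rule borel_measurable_continuous_onI)
      show "dist (h x) (h y) < d/4" if "x \<in> cball 0 R" "dist x y < e" for x y
        using \<eta>(2) that e by simp
    qed (use d e in auto)
    also have "\<dots> < ereal d" using d by simp
    finally show "prokhorov (distr \<mu> borel h) (distr \<nu> borel h) < ereal d" .
  qed (use \<eta> d in auto)
qed

lemma pcont_map_at_pi_W:
  fixes g :: "real^'n \<Rightarrow> real" and X :: "'w \<Rightarrow> real^'n"
  assumes M: "prob_space M" and X: "X \<in> L0 M" and g: "continuous_on UNIV g"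
  shows "pcont_map_at (L0 M) (pi_W M) (pi_W1 M) ((\<circ>) g) X"
  unfolding pcont_map_at_def
proof (intro allI impI)
  fix d :: real assume d: "d > 0"
  define h where "h x = (vec (g x) :: real^1)" for x
  have h: "continuous_on UNIV h"
    unfolding h_def
    by (rule continuous_on_compose2[OF continuous_at_imp_continuous_on[OF ballI[OF continuous_vec]] g])
      auto
  have hm: "h \<in> borel_measurable borel" using h by (rule borel_measurable_continuous_onI)
  have law: "distr M borel (to_vec1 (g \<circ> Y)) = distr (distr M borel Y) borel h"
    if "Y \<in> borel_measurable M" for Y
    using distr_distr[OF hm that] by (simp add: to_vec1_def h_def comp_def)
  have Xm: "X \<in> borel_measurable M" using X by (simp add: L0_def)
  obtain \<delta> where "\<delta> > 0" and \<delta>: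
    "\<And>\<nu>. prob_space \<nu> \<Longrightarrow> sets \<nu> = sets borel \<Longrightarrow> prokhorov (distr M borel X) \<nu> < ereal \<delta> \<Longrightarrow>
       prokhorov (distr (distr M borel X) borel h) (distr \<nu> borel h) < ereal d"
    using prokhorov_distr_continuous[OF prob_space.prob_space_distr[OF M Xm] sets_distr h d] by blast
  show "\<exists>\<delta>>0. \<forall>Y\<in>L0 M. pi_W M X Y < ereal \<delta> \<longrightarrow> pi_W1 M (g \<circ> X) (g \<circ> Y) < ereal d"
  proof (intro exI conjI ballI impI)
    fix Y assume Y: "Y \<in> L0 M" "pi_W M X Y < ereal \<delta>"
    then have Ym: "Y \<in> borel_measurable M" by (simp add: L0_def)
    have "prokhorov (distr (distr M borel X) borel h) (distr (distr M borel Y) borel h) < ereal d"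
      using Y(2) by (intro \<delta> prob_space.prob_space_distr[OF M Ym]) (simp_all add: pi_W_def)
    then show "pi_W1 M (g \<circ> X) (g \<circ> Y) < ereal d"
      by (simp add: pi_W1_def pi_W_def law Xm Ym)
  qed fact
qed

lemma powr_less_powr_iff: "0 < a \<Longrightarrow> 0 \<le> x \<Longrightarrow> 0 \<le> y \<Longrightarrow> x powr a < y powr a \<longleftrightarrow> x < y"
  for a x y :: real
  by (meson not_less powr_less_mono2 powr_mono2 less_imp_le)

lemma pi_q_less_powr_iff:
  assumes "q > 0" "r \<ge> 0"
  shows "pi_q M q Y Z < ereal (r powr (1/q)) \<longleftrightarrow>
    integrable M (\<lambda>w. norm (Y w - Z w) powr q) \<and> (\<integral>w. norm (Y w - Z w) powr q \<partial>M) < r"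
proof -
  have "(\<integral>w. norm (Y w - Z w) powr q \<partial>M) \<ge> 0" by (intro integral_nonneg_AE) auto
  with assms show ?thesis by (simp add: pi_q_def powr_less_powr_iff)
qed

lemma pi_q1_less_iff:
  assumes "q > 0" "d > 0"
  shows "pi_q1 M q U V < ereal d \<longleftrightarrow>
    integrable M (\<lambda>w. \<bar>U w - V w\<bar> powr q) \<and> (\<integral>w. \<bar>U w - V w\<bar> powr q \<partial>M) < d powr q"
  using pi_q_less_powr_iff[of q "d powr q" M "to_vec1 U" "to_vec1 V"] assms
  by (simp add: pi_q1_def to_vec1_def norm_vec1_diff powr_powr)

lemma powr_add_le:
  fixes a b q :: real
  assumes "a \<ge> 0" "b \<ge> 0" "q > 0"
  shows "(a + b) powr q \<le> 2 powr q * (a powr q + b powr q)"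
proof -
  have "(a + b) powr q \<le> (2 * max a b) powr q"
    using assms by (intro powr_mono2) auto
  also have "\<dots> = 2 powr q * max a b powr q" by (simp add: powr_mult)
  also have "max a b powr q \<le> a powr q + b powr q"
    by (cases "a \<le> b") (auto simp: max_def)
  finally show ?thesis by (simp add: mult_left_mono)
qed

lemma linearly_growing_affine_bound:
  fixes g :: "'a::euclidean_space \<Rightarrow> real"
  assumes g: "continuous_on UNIV g" and lg: "linearly_growing g"
  obtains C D where "C > 0" "D \<ge> 0" "\<And>y. \<bar>g y\<bar> \<le> C * norm y + D"
proof -
  obtain C where C: "C > 0" "\<And>y. norm y > 1 \<Longrightarrow> \<bar>g y\<bar> \<le> C * norm y"
    using lg by (auto simp: linearly_growing_def)
  have "bounded (g ` cball 0 1)"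
    by (intro compact_imp_bounded compact_continuous_image continuous_on_subset[OF g]) auto
  then obtain D where D: "\<And>y. norm y \<le> 1 \<Longrightarrow> \<bar>g y\<bar> \<le> D"
    unfolding bounded_iff by (metis image_eqI mem_cball_0 real_norm_def)
  show ?thesis
  proof (rule that[OF C(1), of "max D 0"])
    show "\<bar>g y\<bar> \<le> C * norm y + max D 0" for y
      using C D[of y] by (cases "norm y > 1") (force, smt (verit) mult_nonneg_nonneg norm_ge_zero)
  qed simp
qed

lemma (in finite_measure) integrable_affine_norm_powr:
  assumes X: "X \<in> Lq M q" and q: "q > 0" and ab: "a \<ge> 0" "b \<ge> 0"
  shows "integrable M (\<lambda>w. (a * norm (X w) + b) powr q)"
proof (rule Bochner_Integration.integrable_bound)
  show "integrable M (\<lambda>w. 2 powr q * (a powr q * norm (X w) powr q + b powr q))"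
    using X by (intro integrable_mult_right integrable_add) (auto simp: Lq_def)
  have "X \<in> borel_measurable M" using X by (simp add: Lq_def)
  then show "(\<lambda>w. (a * norm (X w) + b) powr q) \<in> borel_measurable M" by measurable
  show "AE w in M. norm ((a * norm (X w) + b) powr q)
      \<le> norm (2 powr q * (a powr q * norm (X w) powr q + b powr q))"
  proof (rule AE_I2)
    fix w
    have "(a * norm (X w) + b) powr q \<le> 2 powr q * ((a * norm (X w)) powr q + b powr q)"
      using ab q by (intro powr_add_le) auto
    then show "norm ((a * norm (X w) + b) powr q)
        \<le> norm (2 powr q * (a powr q * norm (X w) powr q + b powr q))"
      using ab by (simp add: powr_mult)
  qed
qed

lemma integral_excess_tendsto_zero:
  fixes V :: "'a \<Rightarrow> real"
  assumes V: "integrable M V"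
  shows "(\<lambda>n::nat. \<integral>w. max (V w - real n) 0 \<partial>M) \<longlonglongrightarrow> 0"
proof -
  have "(\<lambda>n::nat. \<integral>w. max (V w - real n) 0 \<partial>M) \<longlonglongrightarrow> (\<integral>w. 0 \<partial>M)"
  proof (rule integral_dominated_convergence[where w="\<lambda>w. \<bar>V w\<bar>"])
    show "(\<lambda>w. max (V w - real n) 0) \<in> borel_measurable M" for n using V by measurable
    show "AE w in M. (\<lambda>n. max (V w - real n) 0) \<longlonglongrightarrow> 0"
    proof (rule AE_I2, rule tendsto_eventually)
      fix w
      obtain N :: nat where "V w < real N" using reals_Archimedean2 by blast
      then show "eventually (\<lambda>n. max (V w - real n) 0 = 0) sequentially"
        unfolding eventually_sequentially by (intro exI[of _ N]) (auto simp: max_def)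
    qed
    show "AE w in M. norm (max (V w - real n) 0) \<le> \<bar>V w\<bar>" for n by (auto simp: max_def)
  qed (use V in auto)
  then show ?thesis by simp
qed

lemma (in prob_space) ex_truncation_level:
  fixes X :: "'a \<Rightarrow> 'b::real_normed_vector"
  assumes V: "integrable M V" and X: "X \<in> borel_measurable M" and t: "t > 0"
  obtains K :: nat and R :: real where "(\<integral>w. max (V w - real K) 0 \<partial>M) < t"
    and "real K * measure M {w\<in>space M. R < norm (X w)} \<le> t"
proof -
  have "eventually (\<lambda>n. (\<integral>w. max (V w - real n) 0 \<partial>M) < t) sequentially"
    using t by (rule order_tendstoD(2)[OF integral_excess_tendsto_zero[OF V]])
  then obtain K :: nat where K: "(\<integral>w. max (V w - real K) 0 \<partial>M) < t"
    by (auto simp: eventually_sequentially)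
  have "t / (real K + 1) > 0" using t by simp
  then obtain R where "measure M {w\<in>space M. R < norm (X w)} < t / (real K + 1)"
    by (rule ex_measure_norm_gt_less[OF X])
  then have "real K * measure M {w\<in>space M. R < norm (X w)} \<le> real K * (t / (real K + 1))"
    by (intro mult_left_mono) auto
  also have "\<dots> \<le> t" using t by (simp add: field_simps)
  finally show ?thesis using K that by blast
qed

lemma powr_diff_le_affine_growth:
  fixes g :: "'a::real_normed_vector \<Rightarrow> real"
  assumes g: "\<And>y. \<bar>g y\<bar> \<le> C * norm y + D" and C: "C \<ge> 0" and D: "D \<ge> 0" and q: "q > 0"
  shows "\<bar>g x - g y\<bar> powr q
    \<le> 2 powr q * (2 * C * norm x + 2 * D) powr q + 2 powr q * C powr q * norm (x - y) powr q"
proof -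
  have "norm y \<le> norm x + norm (x - y)"
    using norm_triangle_ineq4[of x "x - y"] by simp
  then have "C * norm y \<le> C * norm x + C * norm (x - y)"
    using C by (simp add: distrib_left[symmetric] mult_left_mono)
  then have "\<bar>g x - g y\<bar> \<le> (2 * C * norm x + 2 * D) + C * norm (x - y)"
    using g[of x] g[of y] by linarith
  then have "\<bar>g x - g y\<bar> powr q \<le> (2 * C * norm x + 2 * D + C * norm (x - y)) powr q"
    using q by (intro powr_mono2) auto
  also have "\<dots>
      \<le> 2 powr q * (2 * C * norm x + 2 * D) powr q + 2 powr q * C powr q * norm (x - y) powr q"
    using powr_add_le[of "2 * C * norm x + 2 * D" "C * norm (x - y)" q] C D q
    by (simp add: powr_mult distrib_left)
  finally show ?thesis .
qed

lemma powr_diff_le_truncated: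
  fixes g :: "'a::real_normed_vector \<Rightarrow> real"
  assumes g: "\<And>y. \<bar>g y\<bar> \<le> C * norm y + D" and C: "C \<ge> 0" and D: "D \<ge> 0"
    and q: "q > 0" and \<eta>: "\<eta> > 0" and K: "K \<ge> 0"
    and near: "norm x \<le> R \<Longrightarrow> norm (x - y) < \<eta> \<Longrightarrow> \<bar>g x - g y\<bar> < \<epsilon>"
  shows "\<bar>g x - g y\<bar> powr q \<le> \<epsilon> powr q + max (2 powr q * (2 * C * norm x + 2 * D) powr q - K) 0
      + (if R < norm x then K else 0) + (2 powr q * C powr q + K / \<eta> powr q) * norm (x - y) powr q"
    (is "_ \<le> _ + max (?V - K) 0 + ?I + ?c * ?\<Delta>")
proof (cases "norm x \<le> R \<and> norm (x - y) < \<eta>")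
  case True
  then have "\<bar>g x - g y\<bar> powr q \<le> \<epsilon> powr q" using near q by (intro powr_mono2) auto
  moreover have "?I \<ge> 0" "?c * ?\<Delta> \<ge> 0" using K by auto
  ultimately show ?thesis by linarith
next
  case False
  \<comment> \<open>the truncation level K is paid for by R < norm x, or by Markov's bound
     1 \<le> (norm (x - y) / \<eta>) powr q\<close>
  have "K \<le> ?I + K / \<eta> powr q * ?\<Delta>"
  proof (cases "R < norm x")
    case False
    with \<open>\<not> (norm x \<le> R \<and> norm (x - y) < \<eta>)\<close> have "\<eta> powr q \<le> ?\<Delta>"
      using \<eta> q by (intro powr_mono2) auto
    then have "K \<le> K / \<eta> powr q * ?\<Delta>"
      using K \<eta> by (simp add: field_simps mult_left_mono)
    with False show ?thesis by simp
  qed (use K \<eta> in simp)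
  moreover have "?V \<le> max (?V - K) 0 + K" by simp
  moreover have "?c * ?\<Delta> = 2 powr q * C powr q * ?\<Delta> + K / \<eta> powr q * ?\<Delta>"
    by (simp add: distrib_right)
  moreover have "\<epsilon> powr q \<ge> 0" by simp
  ultimately show ?thesis
    using powr_diff_le_affine_growth[OF g C D q, of x y] by linarith
qed

lemma (in prob_space) integral_powr_diff_le:
  fixes g :: "real^'n \<Rightarrow> real"
  assumes X: "X \<in> Lq M q" and Ym: "Y \<in> borel_measurable M"
    and \<Delta>: "integrable M (\<lambda>w. norm (X w - Y w) powr q)"
    and gm: "g \<in> borel_measurable borel" and g: "\<And>y. \<bar>g y\<bar> \<le> C * norm y + D"
    and C: "C \<ge> 0" and D: "D \<ge> 0" and q: "q > 0" and \<eta>: "\<eta> > 0" and K: "K \<ge> 0"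
    and near: "\<And>x y. norm x \<le> R \<Longrightarrow> norm (x - y) < \<eta> \<Longrightarrow> \<bar>g x - g y\<bar> < \<epsilon>"
  defines "V \<equiv> \<lambda>w. 2 powr q * (2 * C * norm (X w) + 2 * D) powr q"
    and "c \<equiv> 2 powr q * C powr q + K / \<eta> powr q"
  shows "integrable M (\<lambda>w. \<bar>g (X w) - g (Y w)\<bar> powr q)"
    and "(\<integral>w. \<bar>g (X w) - g (Y w)\<bar> powr q \<partial>M) \<le> \<epsilon> powr q + (\<integral>w. max (V w - K) 0 \<partial>M)
      + K * measure M {w\<in>space M. R < norm (X w)} + c * (\<integral>w. norm (X w - Y w) powr q \<partial>M)"
proof -
  have Xm: "X \<in> borel_measurable M" using X by (simp add: Lq_def)
  define S where "S = {w\<in>space M. R < norm (X w)}"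
  have S: "S \<in> sets M" unfolding S_def using Xm by measurable
  define B where
    "B w = \<epsilon> powr q + max (V w - K) 0 + K * indicator S w + c * norm (X w - Y w) powr q" for w
  have "integrable M V"
    unfolding V_def using integrable_affine_norm_powr[OF X q, of "2 * C" "2 * D"] C D by simp
  then have B: "integrable M B"
    unfolding B_def using \<Delta> S by (auto simp: less_top[symmetric])
  have FB: "\<bar>g (X w) - g (Y w)\<bar> powr q \<le> B w" if "w \<in> space M" for w
    using powr_diff_le_truncated[OF g C D q \<eta> K near, of "X w" R "Y w"] that
    by (simp add: B_def V_def c_def S_def indicator_def split: if_split_asm)
  show F: "integrable M (\<lambda>w. \<bar>g (X w) - g (Y w)\<bar> powr q)"
  proof (rule Bochner_Integration.integrable_bound[OF B])
    show "(\<lambda>w. \<bar>g (X w) - g (Y w)\<bar> powr q) \<in> borel_measurable M" using gm Xm Ym by measurable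
    show "AE w in M. norm (\<bar>g (X w) - g (Y w)\<bar> powr q) \<le> norm (B w)"
      using FB by (intro AE_I2) (auto intro: order_trans[OF _ abs_ge_self])
  qed
  have "(\<integral>w. \<bar>g (X w) - g (Y w)\<bar> powr q \<partial>M) \<le> integral\<^sup>L M B"
    using F B FB by (intro integral_mono) auto
  also have "integral\<^sup>L M B = \<epsilon> powr q + (\<integral>w. max (V w - K) 0 \<partial>M) + K * measure M S
      + c * (\<integral>w. norm (X w - Y w) powr q \<partial>M)"
    unfolding B_def using \<Delta> S \<open>integrable M V\<close>
    by (simp add: integral_add integrable_add prob_space less_top[symmetric])
  finally show "(\<integral>w. \<bar>g (X w) - g (Y w)\<bar> powr q \<partial>M) \<le> \<epsilon> powr q + (\<integral>w. max (V w - K) 0 \<partial>M)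
      + K * measure M {w\<in>space M. R < norm (X w)} + c * (\<integral>w. norm (X w - Y w) powr q \<partial>M)"
    unfolding S_def .
qed

lemma pcont_map_at_pi_q:
  fixes g :: "real^'n \<Rightarrow> real" and X :: "'w \<Rightarrow> real^'n"
  assumes M: "prob_space M" and q: "q > 0" and X: "X \<in> Lq M q"
    and g: "continuous_on UNIV g" and lg: "linearly_growing g"
  shows "pcont_map_at (Lq M q) (pi_q M q) (pi_q1 M q) ((\<circ>) g) X"
  unfolding pcont_map_at_def
proof (intro allI impI)
  interpret prob_space M by fact
  fix d :: real assume d: "d > 0"
  have Xm: "X \<in> borel_measurable M" using X by (simp add: Lq_def)
  have gm: "g \<in> borel_measurable borel" using g by (rule borel_measurable_continuous_onI)
  obtain C D where C: "C > 0" and D: "D \<ge> 0" and gCD: "\<And>y. \<bar>g y\<bar> \<le> C * norm y + D"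
    using linearly_growing_affine_bound[OF g lg] by blast
  define V where "V w = 2 powr q * (2 * C * norm (X w) + 2 * D) powr q" for w
  define t where "t = d powr q / 4"
  have t: "t > 0" using d by (simp add: t_def)
  have "integrable M V"
    unfolding V_def using integrable_affine_norm_powr[OF X q, of "2 * C" "2 * D"] C D by simp
  then obtain K :: nat and R :: real where K: "(\<integral>w. max (V w - real K) 0 \<partial>M) < t"
    and R: "real K * measure M {w\<in>space M. R < norm (X w)} \<le> t"
    using ex_truncation_level[OF _ Xm t] by blast
  define \<epsilon> where "\<epsilon> = t powr (1/q)"
  have \<epsilon>: "\<epsilon> > 0" "\<epsilon> powr q = t" using t q by (simp_all add: \<epsilon>_def powr_powr)
  obtain \<eta> where \<eta>: "\<eta> > 0" "\<And>x y. norm x \<le> R \<Longrightarrow> dist x y < \<eta> \<Longrightarrow> dist (g x) (g y) < \<epsilon>"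
    using uniform_continuity_near_cball[OF g \<epsilon>(1)] by blast
  define c where "c = 2 powr q * C powr q + real K / \<eta> powr q"
  have c: "c \<ge> 0" by (simp add: c_def)
  show "\<exists>\<delta>>0. \<forall>Y\<in>Lq M q. pi_q M q X Y < ereal \<delta> \<longrightarrow> pi_q1 M q (g \<circ> X) (g \<circ> Y) < ereal d"
  proof (intro exI[of _ "(t / (c + 1)) powr (1/q)"] conjI ballI impI)
    fix Y assume Y: "Y \<in> Lq M q" "pi_q M q X Y < ereal ((t / (c + 1)) powr (1/q))"
    then have \<Delta>: "integrable M (\<lambda>w. norm (X w - Y w) powr q)"
      and \<Delta>_less: "(\<integral>w. norm (X w - Y w) powr q \<partial>M) < t / (c + 1)"
      using pi_q_less_powr_iff[OF q, of "t / (c + 1)"] t c by auto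
    have Ym: "Y \<in> borel_measurable M" using Y(1) by (simp add: Lq_def)
    have near: "\<bar>g x - g y\<bar> < \<epsilon>" if "norm x \<le> R" "norm (x - y) < \<eta>" for x y
      using \<eta>(2)[OF that(1)] that(2) by (simp add: dist_norm dist_real_def)
    note est = integral_powr_diff_le[where K="real K" and R=R and \<epsilon>=\<epsilon>,
        OF X Ym \<Delta> gm gCD less_imp_le[OF C] D q \<eta>(1) of_nat_0_le_iff near]
    have "c * (\<integral>w. norm (X w - Y w) powr q \<partial>M) \<le> c * (t / (c + 1))"
      using \<Delta>_less c by (intro mult_left_mono) auto
    also have "\<dots> \<le> t" using t c by (simp add: field_simps)
    finally have "(\<integral>w. \<bar>g (X w) - g (Y w)\<bar> powr q \<partial>M) < 4 * t"
      using est(2) K R \<epsilon>(2) unfolding V_def c_def by linarith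
    with est(1) show "pi_q1 M q (g \<circ> X) (g \<circ> Y) < ereal d"
      by (simp add: pi_q1_less_iff[OF q d] comp_def t_def)
  qed (use t c q in simp)
qed

theorem proposition2:
  fixes M :: "'w measure"
    and G :: "(real^'n \<Rightarrow> real) set"
    and \<rho> :: "('w \<Rightarrow> real) \<Rightarrow> ereal"
    and X :: "'w \<Rightarrow> real^'n"
  assumes "prob_space M"
    and "atomless M"
    and "G \<subseteq> borel_measurable borel"
  shows
    "(compatible \<rho> G (Linf M) (pi_inf M) \<and> X \<in> Linf M \<and>
      (\<exists>g\<in>optimal_set \<rho> G X. continuous_on UNIV g) \<and>
      (\<forall>U\<in>obj_dom G (Linf M). pcont_at (obj_dom G (Linf M)) (pi_inf1 M) \<rho> U)
      \<longrightarrow> robust \<rho> G (Linf M) (pi_inf M) X)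
   \<and> (\<forall>q::real. 1 \<le> q \<longrightarrow>
      (compatible \<rho> G (Lq M q) (pi_q M q) \<and> X \<in> Lq M q \<and>
       (\<exists>g\<in>optimal_set \<rho> G X. continuous_on UNIV g \<and> linearly_growing g) \<and>
       (\<forall>U\<in>obj_dom G (Lq M q). pcont_at (obj_dom G (Lq M q)) (pi_q1 M q) \<rho> U)
       \<longrightarrow> robust \<rho> G (Lq M q) (pi_q M q) X))
   \<and> (compatible \<rho> G (L0 M) (pi_W M) \<and> X \<in> L0 M \<and>
      (\<exists>g\<in>optimal_set \<rho> G X. continuous_on UNIV g) \<and>
      (\<forall>U\<in>obj_dom G (L0 M). pcont_at (obj_dom G (L0 M)) (pi_W1 M) \<rho> U)
      \<longrightarrow> robust \<rho> G (L0 M) (pi_W M) X)"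
proof -
  have Linf: "robust \<rho> G (Linf M) (pi_inf M) X"
    if "g \<in> optimal_set \<rho> G X" "continuous_on UNIV g" "X \<in> Linf M"
      "\<forall>U\<in>obj_dom G (Linf M). pcont_at (obj_dom G (Linf M)) (pi_inf1 M) \<rho> U" for g
    using pcont_map_at_pi_inf[OF that(3,2)] by (rule robust_if_pcont_map_at[OF that(1,3,4)])
  have Lq: "robust \<rho> G (Lq M q) (pi_q M q) X"
    if "1 \<le> q" "g \<in> optimal_set \<rho> G X" "continuous_on UNIV g" "linearly_growing g" "X \<in> Lq M q"
      "\<forall>U\<in>obj_dom G (Lq M q). pcont_at (obj_dom G (Lq M q)) (pi_q1 M q) \<rho> U" for q g
    using pcont_map_at_pi_q[OF assms(1) _ that(5,3,4)] that(1)
    by (intro robust_if_pcont_map_at[OF that(2,5,6)]) simp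
  have L0: "robust \<rho> G (L0 M) (pi_W M) X"
    if "g \<in> optimal_set \<rho> G X" "continuous_on UNIV g" "X \<in> L0 M"
      "\<forall>U\<in>obj_dom G (L0 M). pcont_at (obj_dom G (L0 M)) (pi_W1 M) \<rho> U" for g
    using pcont_map_at_pi_W[OF assms(1) that(3,2)] by (rule robust_if_pcont_map_at[OF that(1,3,4)])
  show ?thesis using Linf Lq L0 by blast
qed

end
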